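(* Let $k\ge1$. The generating function of spanning oriented forests of the hypercube $\{0,1\}^k$, with a weight $z$ per root and a weight $y_i^j$ for each edge changing the $i$-th coordinate to the value $j$, is $$\prod_{J\subseteq\{1,\dots,k\}}\Big(z+\sum_{i\in J}(y_i^0+y_i^1)\Big).$$
   Context: The hypercube $\{0,1\}^k$ is viewed as a directed graph with, for any two points differing in exactly one coordinate, an edge in each direction. A spanning oriented forest is a subgraph containing all vertices, with no cycle, in which every vertex has outdegree $0$ or $1$; the vertices of outdegree $0$ are its roots. Its weight is $z^{\#\text{roots}}$ times the product of the weights of its edges, where an edge changing coordinate $i$ to the value $j\in\{0,1\}$ has weight $y_i^j$; $z,y_i^j$ are indeterminates. The product is over all subsets $J$, including $J=\emptyset$. *)

theory Defs
  imports "HOL-Library.FuncSet"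
begin

text \<open>Vertices of the hypercube {0,1}^k: functions on the coordinates {1..k} with values in bool
  (False = 0, True = 1), extensional (undefined outside {1..k}).\<close>
definition cube_vertices :: "nat \<Rightarrow> (nat \<Rightarrow> bool) set" where
  "cube_vertices k = {1..k} \<rightarrow>\<^sub>E (UNIV :: bool set)"

definition cube_edges :: "nat \<Rightarrow> ((nat \<Rightarrow> bool) \<times> (nat \<Rightarrow> bool)) set" where
  "cube_edges k = {(x, y). x \<in> cube_vertices k \<and> y \<in> cube_vertices k \<and>
                           card {i \<in> {1..k}. x i \<noteq> y i} = 1}"

definition spanning_oriented_forests :: "nat \<Rightarrow> ((nat \<Rightarrow> bool) \<times> (nat \<Rightarrow> bool)) set set" where
  "spanning_oriented_forests k = {F. F \<subseteq> cube_edges k \<and> acyclic F \<and>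
       (\<forall>x \<in> cube_vertices k. card {y. (x, y) \<in> F} \<le> 1)}"

definition forest_roots :: "nat \<Rightarrow> ((nat \<Rightarrow> bool) \<times> (nat \<Rightarrow> bool)) set \<Rightarrow> (nat \<Rightarrow> bool) set" where
  "forest_roots k F = {x \<in> cube_vertices k. \<forall>y. (x, y) \<notin> F}"

definition edge_coord :: "nat \<Rightarrow> (nat \<Rightarrow> bool) \<Rightarrow> (nat \<Rightarrow> bool) \<Rightarrow> nat" where
  "edge_coord k x y = (THE i. i \<in> {1..k} \<and> x i \<noteq> y i)"

text \<open>Weight of an edge x \<rightarrow> y changing coordinate i to value j = y i: the value yw i j
  (yw i False = y_i^0, yw i True = y_i^1).\<close>
definition edge_weight :: "nat \<Rightarrow> (nat \<Rightarrow> bool \<Rightarrow> 'a) \<Rightarrow> (nat \<Rightarrow> bool) \<Rightarrow> (nat \<Rightarrow> bool) \<Rightarrow> 'a" where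
  "edge_weight k yw x y = (let i = edge_coord k x y in yw i (y i))"

definition forest_weight :: "nat \<Rightarrow> 'a::comm_ring_1 \<Rightarrow> (nat \<Rightarrow> bool \<Rightarrow> 'a)
     \<Rightarrow> ((nat \<Rightarrow> bool) \<times> (nat \<Rightarrow> bool)) set \<Rightarrow> 'a" where
  "forest_weight k z yw F = z ^ card (forest_roots k F) * (\<Prod>(x, y) \<in> F. edge_weight k yw x y)"

end

theory Submission
  imports Defs "Jordan_Normal_Form.Determinant"
begin

text \<open>Let \<open>L\<close> be the weighted Laplacian of a finite digraph. Expanding every row of
  \<open>det (z I + L)\<close> over the choices ``the vertex is a root'' (coefficient \<open>z\<close>) or ``the vertex
  points along one of its out-edges'' (coefficient the edge weight) writes the determinant as a
  sum over choice functions \<open>C\<close> of their weights times \<open>det (I - A\<^sub>C)\<close>, where \<open>A\<^sub>C\<close> is the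
  adjacency matrix of the chosen edges. That determinant is 1 if the chosen graph is acyclic (the
  matrix is triangular along a topological order) and 0 otherwise (the indicator of the vertices
  on cycles is a left null vector). Hence the forest generating function is \<open>det (z I + L)\<close>.

  On the hypercube \<open>L\<close> is the Kronecker sum of the \<open>2 \<times> 2\<close> Laplacians
  \<open>[[y\<^sub>i\<^sup>1, -y\<^sub>i\<^sup>1], [-y\<^sub>i\<^sup>0, y\<^sub>i\<^sup>0]]\<close>, each of which the zeta matrix \<open>[[1, 0], [1, 1]]\<close>
  conjugates to the triangular \<open>[[0, -y\<^sub>i\<^sup>1], [0, y\<^sub>i\<^sup>0 + y\<^sub>i\<^sup>1]]\<close>. So the zeta matrix of the
  subset order conjugates \<open>z I + L\<close> to a matrix that is triangular for that order, with diagonal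
  entries \<open>z + (\<Sum>i\<in>J. y\<^sub>i\<^sup>0 + y\<^sub>i\<^sup>1)\<close>.\<close>

section \<open>Determinants of matrices indexed by a finite set\<close>

definition det_on :: "'v set \<Rightarrow> ('v \<Rightarrow> 'v \<Rightarrow> 'a::comm_ring_1) \<Rightarrow> 'a" where
  "det_on V M = (\<Sum>p | p permutes V. of_int (sign p) * (\<Prod>x\<in>V. M x (p x)))"

definition mat_mult_on :: "'v set \<Rightarrow> ('v \<Rightarrow> 'v \<Rightarrow> 'a::comm_ring_1) \<Rightarrow> ('v \<Rightarrow> 'v \<Rightarrow> 'a) \<Rightarrow> 'v \<Rightarrow> 'v \<Rightarrow> 'a" where
  "mat_mult_on V M N x y = (\<Sum>w\<in>V. M x w * N w y)"

lemma det_on_cong: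
  assumes "\<And>x y. x \<in> V \<Longrightarrow> y \<in> V \<Longrightarrow> M x y = N x y"
  shows "det_on V M = det_on V N"
  unfolding det_on_def using assms
  by (intro sum.cong refl arg_cong2[where f = "(*)"] prod.cong) (auto simp: permutes_in_image)

lemma det_on_triangular:
  fixes h :: "'v \<Rightarrow> 'b::ordered_cancel_comm_monoid_add"
  assumes V: "finite V"
    and upper: "\<And>x y. x \<in> V \<Longrightarrow> y \<in> V \<Longrightarrow> x \<noteq> y \<Longrightarrow> M x y \<noteq> 0 \<Longrightarrow> h x < h y"
  shows "det_on V M = (\<Prod>x\<in>V. M x x)"
proof -
  have vanish: "(\<Prod>x\<in>V. M x (p x)) = 0" if p: "p permutes V" and "p \<noteq> id" for p
  proof (rule ccontr)
    assume prod_nz: "(\<Prod>x\<in>V. M x (p x)) \<noteq> 0"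
    have step: "h x < h (p x)" if "x \<in> V" "p x \<noteq> x" for x
    proof (rule upper)
      show "M x (p x) \<noteq> 0"
      proof
        assume "M x (p x) = 0"
        then have "(\<Prod>x\<in>V. M x (p x)) = 0"
          using V that(1) by (intro prod_zero) auto
        with prod_nz show False ..
      qed
    qed (use that p in \<open>auto simp: permutes_in_image\<close>)
    obtain x0 where x0: "p x0 \<noteq> x0"
      using \<open>p \<noteq> id\<close> by (auto simp: fun_eq_iff)
    then have "x0 \<in> V"
      using p by (meson permutes_not_in)
    have "h x \<le> h (p x)" if "x \<in> V" for x
      using step[OF that] by (cases "p x = x") (simp_all add: less_imp_le)
    then have "sum h V < sum (h \<circ> p) V"
      using V \<open>x0 \<in> V\<close> step[OF \<open>x0 \<in> V\<close> x0] by (intro sum_strict_mono_ex1) auto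
    also have "sum (h \<circ> p) V = sum h V"
      by (rule sum.permute[OF p, symmetric])
    finally show False by simp
  qed
  have "det_on V M = (\<Sum>p\<in>{id}. of_int (sign p) * (\<Prod>x\<in>V. M x (p x)))"
    unfolding det_on_def
  proof (rule sum.mono_neutral_right)
    show "finite {p. p permutes V}"
      using V by (rule finite_permutations)
    show "{id} \<subseteq> {p. p permutes V}"
      by (simp add: permutes_id)
    show "\<forall>p\<in>{p. p permutes V} - {id}. of_int (sign p) * (\<Prod>x\<in>V. M x (p x)) = 0"
      using vanish by simp
  qed
  then show ?thesis by simp
qed

lemma bij_betw_map_permutation:
  assumes "bij_betw f A B"
  shows "bij_betw (map_permutation A f) {p. p permutes A} {q. q permutes B}"
proof (rule bij_betw_byWitness[where f' = "map_permutation B (inv_into A f)"])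
  have inv: "bij_betw (inv_into A f) B A"
    using assms by (rule bij_betw_inv_into)
  show "\<forall>p\<in>{p. p permutes A}. map_permutation B (inv_into A f) (map_permutation A f p) = p"
    using map_permutation_compose_inv[OF assms] bij_betw_inv_into_left[OF assms] by blast
  show "\<forall>q\<in>{q. q permutes B}. map_permutation A f (map_permutation B (inv_into A f) q) = q"
    using map_permutation_compose_inv[OF inv] bij_betw_inv_into_right[OF assms] by blast
  show "map_permutation A f ` {p. p permutes A} \<subseteq> {q. q permutes B}"
    using assms by (auto intro: map_permutation_permutes)
  show "map_permutation B (inv_into A f) ` {q. q permutes B} \<subseteq> {p. p permutes A}"
    using inv by (auto intro: map_permutation_permutes)
qed

lemma det_on_reindex:
  assumes A: "finite A" and f: "bij_betw f A B"
  shows "det_on B M = det_on A (\<lambda>x y. M (f x) (f y))"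
proof -
  have inj: "inj_on f A"
    using f by (rule bij_betw_imp_inj_on)
  have "det_on B M = (\<Sum>p | p permutes A.
      of_int (sign (map_permutation A f p)) * (\<Prod>y\<in>B. M y (map_permutation A f p y)))"
    unfolding det_on_def by (rule sum.reindex_bij_betw[OF bij_betw_map_permutation[OF f], symmetric])
  also have "\<dots> = (\<Sum>p | p permutes A. of_int (sign p) * (\<Prod>x\<in>A. M (f x) (f (p x))))"
  proof (intro sum.cong refl)
    fix p assume "p \<in> {p. p permutes A}"
    then have p: "p permutes A" by simp
    have "(\<Prod>y\<in>B. M y (map_permutation A f p y)) = (\<Prod>x\<in>A. M (f x) (map_permutation A f p (f x)))"
      by (rule prod.reindex_bij_betw[OF f, symmetric])
    also have "\<dots> = (\<Prod>x\<in>A. M (f x) (f (p x)))"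
      using inj by (intro prod.cong refl) (simp add: map_permutation_apply)
    finally show "of_int (sign (map_permutation A f p)) * (\<Prod>y\<in>B. M y (map_permutation A f p y))
        = of_int (sign p) * (\<Prod>x\<in>A. M (f x) (f (p x)))"
      using sign_map_permutation[OF inj p A] by simp
  qed
  finally show ?thesis unfolding det_on_def .
qed

lemma det_on_atLeastLessThan:
  "det_on {0..<n} M = det (mat n n (\<lambda>(i, j). M i j))"
  by (subst det_def'[of _ n]) (auto simp: det_on_def permutes_in_image intro!: sum.cong prod.cong)

lemma det_on_mult:
  assumes V: "finite V"
  shows "det_on V (mat_mult_on V M N) = det_on V M * det_on V N"
proof -
  obtain f where f: "bij_betw f {0..<card V} V"
    using ex_bij_betw_nat_finite[OF V] by blast
  define n where "n = card V"
  let ?mat = "\<lambda>X. mat n n (\<lambda>(i, j). X (f i) (f j))"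
  have "?mat (mat_mult_on V M N) = ?mat M * ?mat N"
  proof (rule eq_matI)
    fix i j assume "i < dim_row (?mat M * ?mat N)" "j < dim_col (?mat M * ?mat N)"
    then show "?mat (mat_mult_on V M N) $$ (i, j) = (?mat M * ?mat N) $$ (i, j)"
      using sum.reindex_bij_betw[OF f, of "\<lambda>w. M (f i) w * N w (f j)"]
      by (simp add: n_def mat_mult_on_def scalar_prod_def)
  qed auto
  moreover have "det_on V X = det (?mat X)" for X
    using det_on_reindex[OF _ f] by (simp add: n_def det_on_atLeastLessThan)
  ultimately show ?thesis
    by (metis det_mult mat_carrier)
qed

lemma det_on_zero_row:
  assumes "finite V" "x0 \<in> V" "\<And>y. y \<in> V \<Longrightarrow> M x0 y = 0"
  shows "det_on V M = 0"
  unfolding det_on_def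
proof (intro sum.neutral ballI)
  fix p assume "p \<in> {p. p permutes V}"
  then have "M x0 (p x0) = 0"
    using assms(2,3) by (simp add: permutes_in_image)
  then have "(\<Prod>x\<in>V. M x (p x)) = 0"
    using assms(1,2) by (intro prod_zero) auto
  then show "of_int (sign p) * (\<Prod>x\<in>V. M x (p x)) = 0"
    by simp
qed

lemma det_on_eq_0_if_left_null:
  assumes V: "finite V" and x0: "x0 \<in> V" "v x0 = 1"
    and null: "\<And>y. y \<in> V \<Longrightarrow> (\<Sum>x\<in>V. v x * M x y) = 0"
  shows "det_on V M = 0"
proof -
  define P where "P x y = (if x = x0 then v y else of_bool (x = y))" for x y
  have "det_on V P = (\<Prod>x\<in>V. P x x)"
    by (rule det_on_triangular[OF V, where h = "\<lambda>x. if x = x0 then 0 else 1 :: nat"])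
       (auto simp: P_def split: if_splits)
  also have "\<dots> = 1"
    using x0 by (intro prod.neutral) (simp add: P_def)
  finally have "det_on V M = det_on V P * det_on V M"
    by simp
  also have "\<dots> = det_on V (mat_mult_on V P M)"
    by (rule det_on_mult[OF V, symmetric])
  also have "\<dots> = 0"
    using V x0(1) by (rule det_on_zero_row) (simp add: mat_mult_on_def P_def null)
  finally show ?thesis .
qed

lemma det_on_sum_rows:
  assumes V: "finite V" and S: "\<And>x. x \<in> V \<Longrightarrow> finite (S x)"
  shows "det_on V (\<lambda>x y. \<Sum>c\<in>S x. a x c * R x c y)
       = (\<Sum>C\<in>PiE V S. (\<Prod>x\<in>V. a x (C x)) * det_on V (\<lambda>x. R x (C x)))"
proof -
  have "det_on V (\<lambda>x y. \<Sum>c\<in>S x. a x c * R x c y)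
      = (\<Sum>p | p permutes V. \<Sum>C\<in>PiE V S.
           (\<Prod>x\<in>V. a x (C x)) * (of_int (sign p) * (\<Prod>x\<in>V. R x (C x) (p x))))"
    unfolding det_on_def using V S
    by (simp add: prod_sum_PiE sum_distrib_left prod.distrib mult.left_commute)
  also have "\<dots> = (\<Sum>C\<in>PiE V S. (\<Prod>x\<in>V. a x (C x)) * det_on V (\<lambda>x. R x (C x)))"
    unfolding det_on_def by (subst sum.swap) (simp add: sum_distrib_left)
  finally show ?thesis .
qed


section \<open>The matrix-forest theorem\<close>

definition oriented_forests :: "'v set \<Rightarrow> ('v \<times> 'v) set \<Rightarrow> ('v \<times> 'v) set set" where
  "oriented_forests V E = {F. F \<subseteq> E \<and> acyclic F \<and> (\<forall>x\<in>V. card {y. (x, y) \<in> F} \<le> 1)}"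

definition forest_matrix :: "('v \<times> 'v) set \<Rightarrow> 'a \<Rightarrow> ('v \<Rightarrow> 'v \<Rightarrow> 'a) \<Rightarrow> 'v \<Rightarrow> 'v \<Rightarrow> 'a::comm_ring_1" where
  "forest_matrix E z w x y =
     of_bool (x = y) * (z + (\<Sum>u\<in>E``{x}. w x u)) - of_bool ((x, y) \<in> E) * w x y"

text \<open>A choice function \<open>C\<close> sends each vertex to itself, making it a root, or to an
  out-neighbour.\<close>

definition choice_graph :: "'v set \<Rightarrow> ('v \<Rightarrow> 'v) \<Rightarrow> ('v \<times> 'v) set" where
  "choice_graph V C = {(x, C x) |x. x \<in> V \<and> C x \<noteq> x}"

definition pointer_row :: "'v \<Rightarrow> 'v \<Rightarrow> 'v \<Rightarrow> 'a::comm_ring_1" where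
  "pointer_row x c y = of_bool (y = x) - of_bool (c \<noteq> x \<and> y = c)"

lemma pointer_row_same [simp]: "pointer_row x c x = 1"
  by (auto simp: pointer_row_def)

lemma mem_choice_graph: "(x, y) \<in> choice_graph V C \<longleftrightarrow> x \<in> V \<and> C x \<noteq> x \<and> y = C x"
  by (auto simp: choice_graph_def)

lemma choice_graph_subset:
  assumes "C \<in> V \<rightarrow> V"
  shows "choice_graph V C \<subseteq> V \<times> V"
  using assms by (auto simp: choice_graph_def)

lemma det_on_pointer_rows_acyclic:
  assumes V: "finite V" and C: "C \<in> V \<rightarrow> V" and acyc: "acyclic (choice_graph V C)"
  shows "det_on V (\<lambda>x. pointer_row x (C x)) = (1::'a::comm_ring_1)"
proof -
  let ?R = "choice_graph V C"
  have R: "?R\<^sup>+ \<subseteq> V \<times> V"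
    using choice_graph_subset[OF C] by (rule trancl_subset_Sigma)
  define h where "h x = card {u. (u, x) \<in> ?R\<^sup>+}" for x
  have "det_on V (\<lambda>x. pointer_row x (C x)) = (\<Prod>x\<in>V. pointer_row x (C x) x :: 'a)"
  proof (rule det_on_triangular[OF V, where h = h])
    fix x y assume "x \<in> V" "y \<in> V" "x \<noteq> y" "pointer_row x (C x) y \<noteq> (0::'a)"
    then have xy: "(x, y) \<in> ?R"
      by (auto simp: pointer_row_def mem_choice_graph split: if_splits)
    have "{u. (u, x) \<in> ?R\<^sup>+} \<subset> {u. (u, y) \<in> ?R\<^sup>+}"
      using xy acyc by (auto simp: acyclic_def intro: trancl_into_trancl)
    moreover have "finite {u. (u, y) \<in> ?R\<^sup>+}"
      using R V by (intro finite_subset[OF _ V]) auto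
    ultimately show "h x < h y"
      unfolding h_def by (rule psubset_card_mono[rotated])
  qed
  then show ?thesis
    by simp
qed

text \<open>On a cycle of the choice graph the map is a bijection, so the indicator of the set of
  vertices lying on cycles is a left null vector of the pointer matrix.\<close>

lemma det_on_pointer_rows_cyclic:
  assumes V: "finite V" and C: "C \<in> V \<rightarrow> V" and cyc: "\<not> acyclic (choice_graph V C)"
  shows "det_on V (\<lambda>x. pointer_row x (C x)) = (0::'a::comm_ring_1)"
proof -
  let ?R = "choice_graph V C"
  define S where "S = {y. (y, y) \<in> ?R\<^sup>+}"
  obtain x0 where "x0 \<in> S"
    using cyc by (auto simp: acyclic_def S_def)
  have SV: "S \<subseteq> V"
    using trancl_subset_Sigma[OF choice_graph_subset[OF C]] by (auto simp: S_def)
  then have finS: "finite S"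
    using V by (rule finite_subset)
  have moves: "C y \<noteq> y" if "y \<in> S" for y
    using that by (auto simp: S_def mem_choice_graph dest: tranclD)
  have "C ` S = S"
  proof
    show "C ` S \<subseteq> S"
    proof
      fix u assume "u \<in> C ` S"
      then obtain y where "y \<in> S" "u = C y" by blast
      then obtain u' where "(y, u') \<in> ?R" "(u', y) \<in> ?R\<^sup>*"
        by (auto simp: S_def dest: tranclD)
      then show "u \<in> S"
        using \<open>u = C y\<close> by (auto simp: S_def mem_choice_graph intro: rtrancl_into_trancl1)
    qed
    show "S \<subseteq> C ` S"
    proof
      fix y assume "y \<in> S"
      then obtain u where u: "(y, u) \<in> ?R\<^sup>*" "(u, y) \<in> ?R"
        by (auto simp: S_def dest: tranclD2)
      then have "u \<in> S"
        by (auto simp: S_def intro: rtrancl_into_trancl2)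
      then show "y \<in> C ` S"
        using u(2) by (auto simp: mem_choice_graph)
    qed
  qed
  then have inj: "inj_on C S"
    using finS by (intro eq_card_imp_inj_on) auto
  show ?thesis
  proof (rule det_on_eq_0_if_left_null[OF V, where v = "\<lambda>x. of_bool (x \<in> S)"])
    show "x0 \<in> V" "of_bool (x0 \<in> S) = (1::'a)"
      using \<open>x0 \<in> S\<close> SV by auto
    fix w
    have "(\<Sum>x\<in>V. of_bool (x \<in> S) * pointer_row x (C x) w)
        = (\<Sum>x\<in>S. of_bool (w = x)) - (\<Sum>x\<in>S. of_bool (w = C x) :: 'a)"
      using V SV moves
      by (simp add: sum.inter_restrict[symmetric] Int_absorb1 pointer_row_def sum_subtractf
               eq_commute[of w] cong: sum.cong)
    also have "(\<Sum>x\<in>S. of_bool (w = C x)) = (\<Sum>x\<in>C ` S. of_bool (w = x) :: 'a)"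
      by (simp add: sum.reindex[OF inj])
    finally show "(\<Sum>x\<in>V. of_bool (x \<in> S) * pointer_row x (C x) w) = (0::'a)"
      using \<open>C ` S = S\<close> by simp
  qed
qed

lemma det_on_pointer_rows:
  assumes "finite V" "C \<in> V \<rightarrow> V"
  shows "det_on V (\<lambda>x. pointer_row x (C x)) = of_bool (acyclic (choice_graph V C))"
  using det_on_pointer_rows_acyclic[OF assms] det_on_pointer_rows_cyclic[OF assms] by auto

lemma oriented_forest_out_unique:
  assumes V: "finite V" and E: "E \<subseteq> V \<times> V" and F: "F \<in> oriented_forests V E"
    and "(x, y) \<in> F" "(x, y') \<in> F"
  shows "y = y'"
proof -
  have "F \<subseteq> V \<times> V" "\<forall>x\<in>V. card {y. (x, y) \<in> F} \<le> 1"
    using E F by (auto simp: oriented_forests_def)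
  moreover have "finite {y. (x, y) \<in> F}"
    using \<open>F \<subseteq> V \<times> V\<close> by (intro finite_subset[OF _ V]) auto
  moreover have "x \<in> V"
    using \<open>F \<subseteq> V \<times> V\<close> assms(4) by auto
  ultimately show ?thesis
    using assms(4,5) card_le_Suc0_iff_eq by fastforce
qed

lemma inj_on_choice_graph: "inj_on (choice_graph V) (PiE V S)"
proof (rule inj_onI)
  fix C C' assume C: "C \<in> PiE V S" and C': "C' \<in> PiE V S"
    and same: "choice_graph V C = choice_graph V C'"
  have "C x = C' x" if "x \<in> V" for x
  proof -
    have "(x, C x) \<in> choice_graph V C' \<longleftrightarrow> (x, C x) \<in> choice_graph V C"
      "(x, C' x) \<in> choice_graph V C \<longleftrightarrow> (x, C' x) \<in> choice_graph V C'"
      using same by auto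
    then show ?thesis
      using that by (auto simp: mem_choice_graph)
  qed
  then show "C = C'"
    using C C' by (auto intro: PiE_ext)
qed

lemma choice_graph_in_oriented_forests:
  assumes C: "C \<in> PiE V (\<lambda>x. insert x (E``{x}))" and acyc: "acyclic (choice_graph V C)"
  shows "choice_graph V C \<in> oriented_forests V E"
proof -
  have "choice_graph V C \<subseteq> E"
    using C by (auto simp: mem_choice_graph)
  moreover have "card {y. (x, y) \<in> choice_graph V C} \<le> 1" for x
    using card_mono[of "{C x}" "{y. (x, y) \<in> choice_graph V C}"] by (auto simp: mem_choice_graph)
  ultimately show ?thesis
    using acyc by (simp add: oriented_forests_def)
qed

lemma oriented_forest_eq_choice_graph:
  assumes V: "finite V" and E: "E \<subseteq> V \<times> V" "irrefl E" and F: "F \<in> oriented_forests V E"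
  obtains C where "C \<in> PiE V (\<lambda>x. insert x (E``{x}))" "choice_graph V C = F"
proof
  have FE: "F \<subseteq> E"
    using F by (simp add: oriented_forests_def)
  define C where "C = restrict (\<lambda>x. if \<exists>y. (x, y) \<in> F then THE y. (x, y) \<in> F else x) V"
  have C_edge: "C x = y" if "(x, y) \<in> F" for x y
  proof -
    have "x \<in> V"
      using that FE E by auto
    moreover have "(THE y. (x, y) \<in> F) = y"
      using oriented_forest_out_unique[OF V E(1) F that] that by blast
    ultimately show ?thesis
      using that by (auto simp: C_def)
  qed
  have C_root: "C x = x" if "x \<in> V" "\<forall>y. (x, y) \<notin> F" for x
    using that by (simp add: C_def)
  show "C \<in> PiE V (\<lambda>x. insert x (E``{x}))"
    using C_edge C_root FE by (force simp: C_def)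
  show "choice_graph V C = F"
  proof safe
    fix x y assume "(x, y) \<in> choice_graph V C"
    then have "x \<in> V" "C x \<noteq> x" "y = C x"
      by (auto simp: mem_choice_graph)
    then show "(x, y) \<in> F"
      using C_edge C_root by metis
  next
    fix x y assume "(x, y) \<in> F"
    moreover have "x \<in> V" "y \<noteq> x"
      using \<open>(x, y) \<in> F\<close> FE E by (auto simp: irrefl_def)
    ultimately show "(x, y) \<in> choice_graph V C"
      using C_edge by (auto simp: mem_choice_graph)
  qed
qed

lemma bij_betw_choice_graph:
  assumes V: "finite V" and E: "E \<subseteq> V \<times> V" "irrefl E"
  shows "bij_betw (choice_graph V)
           {C \<in> PiE V (\<lambda>x. insert x (E``{x})). acyclic (choice_graph V C)} (oriented_forests V E)"
proof (rule bij_betw_imageI)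
  show "inj_on (choice_graph V) {C \<in> PiE V (\<lambda>x. insert x (E``{x})). acyclic (choice_graph V C)}"
    by (rule inj_on_subset[OF inj_on_choice_graph]) blast
  have "F \<in> choice_graph V ` {C \<in> PiE V (\<lambda>x. insert x (E``{x})). acyclic (choice_graph V C)}"
    if F: "F \<in> oriented_forests V E" for F
  proof -
    obtain C where "C \<in> PiE V (\<lambda>x. insert x (E``{x}))" "choice_graph V C = F"
      using oriented_forest_eq_choice_graph[OF V E F] .
    moreover have "acyclic F"
      using F by (simp add: oriented_forests_def)
    ultimately show ?thesis
      by blast
  qed
  then show "choice_graph V ` {C \<in> PiE V (\<lambda>x. insert x (E``{x})). acyclic (choice_graph V C)}
      = oriented_forests V E"
    using choice_graph_in_oriented_forests by blast
qed

lemma choice_graph_weight: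
  fixes z :: "'a::comm_ring_1"
  assumes V: "finite V"
  shows "z ^ card {x\<in>V. \<forall>y. (x, y) \<notin> choice_graph V C} * (\<Prod>(x, y)\<in>choice_graph V C. w x y)
       = (\<Prod>x\<in>V. if C x = x then z else w x (C x))"
proof -
  have roots: "{x\<in>V. \<forall>y. (x, y) \<notin> choice_graph V C} = V \<inter> {x. C x = x}"
    by (auto simp: mem_choice_graph)
  have graph: "choice_graph V C = (\<lambda>x. (x, C x)) ` (V \<inter> - {x. C x = x})"
    by (auto simp: choice_graph_def)
  have "(\<Prod>(x, y)\<in>choice_graph V C. w x y) = (\<Prod>x\<in>V \<inter> - {x. C x = x}. w x (C x))"
    unfolding graph by (subst prod.reindex) (auto intro: inj_onI)
  then show ?thesis
    using V by (simp add: prod.If_cases roots)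
qed

lemma forest_matrix_eq_sum:
  assumes "finite (E``{x})"
  shows "forest_matrix E z w x y
       = of_bool (y = x) * z + (\<Sum>u\<in>E``{x}. w x u * (of_bool (y = x) - of_bool (y = u)))"
proof -
  have "(\<Sum>u\<in>E``{x}. w x u * of_bool (y = u)) = of_bool ((x, y) \<in> E) * w x y"
    using assms by (simp add: of_bool_def if_distrib[of "(*) _"] sum.delta' cong: if_cong)
  then show ?thesis
    by (simp add: forest_matrix_def algebra_simps sum_subtractf sum_distrib_left eq_commute[of y])
qed

lemma forest_matrix_eq_pointer_rows:
  assumes "finite (E``{x})" "(x, x) \<notin> E"
  shows "forest_matrix E z w x y
       = (\<Sum>c\<in>insert x (E``{x}). (if c = x then z else w x c) * pointer_row x c y)"
proof -
  have "(\<Sum>c\<in>E``{x}. (if c = x then z else w x c) * pointer_row x c y)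
      = (\<Sum>u\<in>E``{x}. w x u * (of_bool (y = x) - of_bool (y = u)))"
    using assms(2) by (intro sum.cong refl) (auto simp: pointer_row_def)
  then show ?thesis
    using assms by (simp add: forest_matrix_eq_sum pointer_row_def)
qed

theorem matrix_forest_theorem:
  fixes z :: "'a::comm_ring_1"
  assumes V: "finite V" and E: "E \<subseteq> V \<times> V" and irr: "irrefl E"
  shows "(\<Sum>F\<in>oriented_forests V E. z ^ card {x\<in>V. \<forall>y. (x, y) \<notin> F} * (\<Prod>(x, y)\<in>F. w x y))
       = det_on V (forest_matrix E z w)"
proof -
  let ?S = "\<lambda>x. insert x (E``{x})"
  let ?coef = "\<lambda>x c. if c = x then z else w x c"
  have fin: "finite (E``{x})" for x
    using E V by (intro finite_subset[OF _ V]) auto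
  have choices_V: "C \<in> V \<rightarrow> V" if "C \<in> PiE V ?S" for C
  proof
    fix x assume "x \<in> V"
    then have "C x \<in> ?S x"
      using that by blast
    then show "C x \<in> V"
      using \<open>x \<in> V\<close> E by auto
  qed
  have "(\<Sum>F\<in>oriented_forests V E. z ^ card {x\<in>V. \<forall>y. (x, y) \<notin> F} * (\<Prod>(x, y)\<in>F. w x y))
      = (\<Sum>C | C \<in> PiE V ?S \<and> acyclic (choice_graph V C). \<Prod>x\<in>V. ?coef x (C x))"
    by (subst sum.reindex_bij_betw[OF bij_betw_choice_graph[OF V E irr], symmetric])
       (simp add: choice_graph_weight[OF V])
  also have "\<dots> = (\<Sum>C\<in>PiE V ?S. (\<Prod>x\<in>V. ?coef x (C x)) * of_bool (acyclic (choice_graph V C)))"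
    using V fin by (simp add: sum.inter_filter sum.inter_restrict finite_PiE)
  also have "\<dots> = (\<Sum>C\<in>PiE V ?S. (\<Prod>x\<in>V. ?coef x (C x)) * det_on V (\<lambda>x. pointer_row x (C x)))"
    using V choices_V by (simp add: det_on_pointer_rows)
  also have "\<dots> = det_on V (\<lambda>x y. \<Sum>c\<in>?S x. ?coef x c * pointer_row x c y)"
    using V fin by (simp add: det_on_sum_rows)
  also have "\<dots> = det_on V (forest_matrix E z w)"
    using fin irr by (intro det_on_cong) (simp add: forest_matrix_eq_pointer_rows irreflD)
  finally show ?thesis .
qed


section \<open>The hypercube\<close>

definition flip :: "nat \<Rightarrow> (nat \<Rightarrow> bool) \<Rightarrow> nat \<Rightarrow> bool" where
  "flip i x = x(i := \<not> x i)"

lemma flip_same [simp]: "flip i x i = (\<not> x i)"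
  by (simp add: flip_def)

lemma flip_other [simp]: "j \<noteq> i \<Longrightarrow> flip i x j = x j"
  by (simp add: flip_def)

lemma flip_neq [simp]: "flip i x \<noteq> x"
  by (metis flip_same)

lemma inj_on_flip: "inj_on (\<lambda>i. flip i x) A"
  by (rule inj_onI) (metis flip_other flip_same)

lemma finite_cube_vertices: "finite (cube_vertices k)"
  unfolding cube_vertices_def by (rule finite_PiE) auto

lemma cube_vertex_outside:
  "x \<in> cube_vertices k \<Longrightarrow> j \<notin> {1..k} \<Longrightarrow> x j = undefined"
  by (auto simp: cube_vertices_def PiE_iff extensional_def)

lemma cube_vertex_upd:
  "x \<in> cube_vertices k \<Longrightarrow> i \<in> {1..k} \<Longrightarrow> x(i := b) \<in> cube_vertices k"
  by (auto simp: cube_vertices_def PiE_iff extensional_def)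

lemma cube_vertex_flip:
  "x \<in> cube_vertices k \<Longrightarrow> i \<in> {1..k} \<Longrightarrow> flip i x \<in> cube_vertices k"
  unfolding flip_def by (rule cube_vertex_upd)

lemma cube_vertex_eqI:
  assumes "x \<in> cube_vertices k" "y \<in> cube_vertices k" "\<And>i. i \<in> {1..k} \<Longrightarrow> x i = y i"
  shows "x = y"
proof
  fix j
  show "x j = y j"
    using assms cube_vertex_outside[OF assms(1)] cube_vertex_outside[OF assms(2)]
    by (cases "j \<in> {1..k}") simp_all
qed

lemma mem_cube_edges:
  "(x, y) \<in> cube_edges k \<longleftrightarrow> x \<in> cube_vertices k \<and> (\<exists>i\<in>{1..k}. y = flip i x)"
proof
  assume "(x, y) \<in> cube_edges k"
  then have x: "x \<in> cube_vertices k" and y: "y \<in> cube_vertices k"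
    and "card {i\<in>{1..k}. x i \<noteq> y i} = 1"
    by (auto simp: cube_edges_def)
  then obtain i where i: "{j\<in>{1..k}. x j \<noteq> y j} = {i}"
    by (auto simp: card_1_singleton_iff)
  then have "i \<in> {1..k}"
    by auto
  then have "flip i x \<in> cube_vertices k"
    using x by (intro cube_vertex_flip)
  have "y = flip i x"
  proof (rule cube_vertex_eqI[OF y \<open>flip i x \<in> cube_vertices k\<close>])
    fix j assume "j \<in> {1..k}"
    then show "y j = flip i x j"
      using i by (cases "j = i") auto
  qed
  with x \<open>i \<in> {1..k}\<close> show "x \<in> cube_vertices k \<and> (\<exists>i\<in>{1..k}. y = flip i x)"
    by auto
next
  assume "x \<in> cube_vertices k \<and> (\<exists>i\<in>{1..k}. y = flip i x)"
  then obtain i where "x \<in> cube_vertices k" "i \<in> {1..k}" "y = flip i x"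
    by auto
  moreover have "{j\<in>{1..k}. x j \<noteq> flip i x j} = {i}"
    using \<open>i \<in> {1..k}\<close> by (auto simp: flip_def)
  ultimately show "(x, y) \<in> cube_edges k"
    by (simp add: cube_edges_def flip_def cube_vertex_upd)
qed

lemma cube_edges_subset: "cube_edges k \<subseteq> cube_vertices k \<times> cube_vertices k"
  by (auto simp: cube_edges_def)

lemma irrefl_cube_edges: "irrefl (cube_edges k)"
  unfolding irrefl_def mem_cube_edges using flip_neq by metis

lemma cube_edges_Image:
  "x \<in> cube_vertices k \<Longrightarrow> cube_edges k `` {x} = (\<lambda>i. flip i x) ` {1..k}"
  using mem_cube_edges[of x _ k] by blast

lemma edge_weight_flip:
  assumes "i \<in> {1..k}"
  shows "edge_weight k yw x (flip i x) = yw i (\<not> x i)"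
proof -
  have "edge_coord k x (flip i x) = i"
    unfolding edge_coord_def
    by (rule the_equality) (use assms in \<open>auto simp: flip_def split: if_splits\<close>)
  then show ?thesis
    by (simp add: edge_weight_def)
qed

lemma forest_matrix_cube:
  assumes x: "x \<in> cube_vertices k"
  shows "forest_matrix (cube_edges k) z (edge_weight k yw) x y
       = of_bool (y = x) * z + (\<Sum>i\<in>{1..k}. yw i (\<not> x i) * (of_bool (y = x) - of_bool (y = flip i x)))"
proof -
  have "finite (cube_edges k `` {x})"
    using x by (simp add: cube_edges_Image)
  then show ?thesis
    using x by (simp add: forest_matrix_eq_sum cube_edges_Image sum.reindex inj_on_flip edge_weight_flip)
qed

lemma cube_forest_sum_eq_det:
  "(\<Sum>F\<in>spanning_oriented_forests k. forest_weight k z yw F)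
     = det_on (cube_vertices k) (forest_matrix (cube_edges k) z (edge_weight k yw))"
  using matrix_forest_theorem[OF finite_cube_vertices cube_edges_subset irrefl_cube_edges]
  by (simp add: spanning_oriented_forests_def oriented_forests_def forest_weight_def forest_roots_def)


section \<open>Triangularising the hypercube forest matrix\<close>

definition cube_zeta :: "nat \<Rightarrow> (nat \<Rightarrow> bool) \<Rightarrow> (nat \<Rightarrow> bool) \<Rightarrow> 'a::comm_ring_1" where
  "cube_zeta k x y = of_bool (\<forall>i\<in>{1..k}. y i \<longrightarrow> x i)"

text \<open>\<open>coord_block yw i\<close> is the triangular matrix \<open>[[0, -y\<^sub>i\<^sup>1], [0, y\<^sub>i\<^sup>0 + y\<^sub>i\<^sup>1]]\<close>
  of the header, with rows and columns indexed by \<open>False, True\<close>; \<open>cube_triangular\<close> is their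
  Kronecker sum plus \<open>z I\<close>.\<close>

definition coord_block :: "(nat \<Rightarrow> bool \<Rightarrow> 'a) \<Rightarrow> nat \<Rightarrow> bool \<Rightarrow> bool \<Rightarrow> 'a::comm_ring_1" where
  "coord_block yw i u v = (if v then if u then yw i False + yw i True else - yw i True else 0)"

definition cube_triangular ::
    "nat \<Rightarrow> 'a \<Rightarrow> (nat \<Rightarrow> bool \<Rightarrow> 'a) \<Rightarrow> (nat \<Rightarrow> bool) \<Rightarrow> (nat \<Rightarrow> bool) \<Rightarrow> 'a::comm_ring_1" where
  "cube_triangular k z yw x y =
     of_bool (x = y) * z + (\<Sum>i\<in>{1..k}. of_bool (x = y(i := x i)) * coord_block yw i (x i) (y i))"

lemma cube_vertices_Int_line:
  assumes y: "y \<in> cube_vertices k" and i: "i \<in> {1..k}"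
  shows "cube_vertices k \<inter> {w. w = y(i := w i)} = {y(i := False), y(i := True)}"
proof
  show "cube_vertices k \<inter> {w. w = y(i := w i)} \<subseteq> {y(i := False), y(i := True)}"
  proof
    fix w assume "w \<in> cube_vertices k \<inter> {w. w = y(i := w i)}"
    then have "w = y(i := w i)"
      by blast
    then show "w \<in> {y(i := False), y(i := True)}"
      by (cases "w i") simp_all
  qed
  show "{y(i := False), y(i := True)} \<subseteq> cube_vertices k \<inter> {w. w = y(i := w i)}"
    using cube_vertex_upd[OF y i] by auto
qed

lemma fun_upd_False_neq_True: "f(i := False) \<noteq> f(i := True)"
  by (metis fun_upd_same)

lemma det_cube_zeta: "det_on (cube_vertices k) (cube_zeta k) = (1::'a::comm_ring_1)"
proof -
  have "det_on (cube_vertices k) (cube_zeta k) = (\<Prod>x\<in>cube_vertices k. cube_zeta k x x :: 'a)"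
  proof (rule det_on_triangular[OF finite_cube_vertices, where h = "\<lambda>x. card {i\<in>{1..k}. \<not> x i}"])
    fix x y assume x: "x \<in> cube_vertices k" and y: "y \<in> cube_vertices k" and "x \<noteq> y"
      and "cube_zeta k x y \<noteq> (0::'a)"
    then have below: "\<forall>i\<in>{1..k}. y i \<longrightarrow> x i"
      by (simp add: cube_zeta_def)
    obtain i where "i \<in> {1..k}" "x i \<noteq> y i"
      using cube_vertex_eqI[OF x y] \<open>x \<noteq> y\<close> by blast
    then have "{i\<in>{1..k}. \<not> x i} \<subset> {i\<in>{1..k}. \<not> y i}"
      using below by auto
    then show "card {i\<in>{1..k}. \<not> x i} < card {i\<in>{1..k}. \<not> y i}"
      by (rule psubset_card_mono[rotated]) simp
  qed
  then show ?thesis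
    by (simp add: cube_zeta_def)
qed

lemma det_cube_triangular:
  "det_on (cube_vertices k) (cube_triangular k z yw)
     = (\<Prod>x\<in>cube_vertices k. z + (\<Sum>i | i \<in> {1..k} \<and> x i. yw i False + yw i True))"
proof -
  have "det_on (cube_vertices k) (cube_triangular k z yw) = (\<Prod>x\<in>cube_vertices k. cube_triangular k z yw x x)"
  proof (rule det_on_triangular[OF finite_cube_vertices, where h = "\<lambda>x. card {i\<in>{1..k}. x i}"])
    fix x y assume "x \<in> cube_vertices k" "y \<in> cube_vertices k" "x \<noteq> y"
      and "cube_triangular k z yw x y \<noteq> 0"
    then have "(\<Sum>i\<in>{1..k}. of_bool (x = y(i := x i)) * coord_block yw i (x i) (y i)) \<noteq> 0"
      by (simp add: cube_triangular_def)
    then obtain i where "i \<in> {1..k}" "of_bool (x = y(i := x i)) * coord_block yw i (x i) (y i) \<noteq> 0"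
      by (rule sum.not_neutral_contains_not_neutral)
    then have i: "i \<in> {1..k}" "x = y(i := x i)" "coord_block yw i (x i) (y i) \<noteq> 0"
      by (auto simp: of_bool_def split: if_splits)
    then have "y i" "\<not> x i"
      using \<open>x \<noteq> y\<close> by (auto simp: coord_block_def split: if_splits)
    then have "{i\<in>{1..k}. x i} \<subset> {i\<in>{1..k}. y i}"
      using i by (auto simp: fun_eq_iff split: if_splits)
    then show "card {i\<in>{1..k}. x i} < card {i\<in>{1..k}. y i}"
      by (rule psubset_card_mono[rotated]) simp
  qed
  also have "\<dots> = (\<Prod>x\<in>cube_vertices k. z + (\<Sum>i | i \<in> {1..k} \<and> x i. yw i False + yw i True))"
    by (intro prod.cong refl, subst sum.inter_filter)
       (auto simp: cube_triangular_def coord_block_def intro: sum.cong)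
  finally show ?thesis .
qed

lemma forest_matrix_cube_mult_zeta:
  assumes x: "x \<in> cube_vertices k"
  shows "mat_mult_on (cube_vertices k) (forest_matrix (cube_edges k) z (edge_weight k yw)) (cube_zeta k) x y
       = z * cube_zeta k x y + (\<Sum>i\<in>{1..k}. yw i (\<not> x i) * (cube_zeta k x y - cube_zeta k (flip i x) y))"
proof -
  let ?V = "cube_vertices k" and ?Z = "cube_zeta k"
  have "mat_mult_on ?V (forest_matrix (cube_edges k) z (edge_weight k yw)) ?Z x y
      = (\<Sum>w\<in>?V. of_bool (w = x) * (z * ?Z w y)
          + (\<Sum>i\<in>{1..k}. yw i (\<not> x i) * (of_bool (w = x) * ?Z w y - of_bool (w = flip i x) * ?Z w y)))"
    unfolding mat_mult_on_def using x
    by (intro sum.cong refl)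
       (simp add: forest_matrix_cube distrib_right sum_distrib_right mult.assoc left_diff_distrib)
  also have "\<dots> = (\<Sum>w\<in>?V. of_bool (w = x) * (z * ?Z w y))
      + (\<Sum>i\<in>{1..k}. yw i (\<not> x i) * ((\<Sum>w\<in>?V. of_bool (w = x) * ?Z w y)
                                          - (\<Sum>w\<in>?V. of_bool (w = flip i x) * ?Z w y)))"
    by (simp only: sum.distrib, subst sum.swap)
       (simp add: sum_distrib_left sum_subtractf right_diff_distrib)
  also have "\<dots> = z * ?Z x y + (\<Sum>i\<in>{1..k}. yw i (\<not> x i) * (?Z x y - ?Z (flip i x) y))"
    using x finite_cube_vertices by (simp add: cube_vertex_flip Int_absorb1)
  finally show ?thesis .
qed

lemma cube_zeta_mult_triangular:
  assumes y: "y \<in> cube_vertices k"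
  shows "mat_mult_on (cube_vertices k) (cube_zeta k) (cube_triangular k z yw) x y
       = z * cube_zeta k x y + (\<Sum>i\<in>{1..k}.
            cube_zeta k x (y(i := False)) * coord_block yw i False (y i)
          + cube_zeta k x (y(i := True)) * coord_block yw i True (y i))"
proof -
  let ?V = "cube_vertices k" and ?Z = "cube_zeta k"
  have "mat_mult_on ?V ?Z (cube_triangular k z yw) x y
      = (\<Sum>w\<in>?V. of_bool (w = y) * (z * ?Z x w))
      + (\<Sum>i\<in>{1..k}. \<Sum>w\<in>?V. of_bool (w = y(i := w i)) * (?Z x w * coord_block yw i (w i) (y i)))"
    unfolding mat_mult_on_def cube_triangular_def
    by (simp only: distrib_left sum.distrib sum_distrib_left, subst sum.swap) (simp add: mult_ac)
  also have "\<dots> = z * ?Z x y + (\<Sum>i\<in>{1..k}.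
            ?Z x (y(i := False)) * coord_block yw i False (y i)
          + ?Z x (y(i := True)) * coord_block yw i True (y i))"
    using y finite_cube_vertices by (simp add: cube_vertices_Int_line fun_upd_False_neq_True)
  finally show ?thesis .
qed

lemma cube_zeta_coord_identity:
  assumes i: "i \<in> {1..k}"
  shows "yw i (\<not> x i) * (cube_zeta k x y - cube_zeta k (flip i x) y)
       = cube_zeta k x (y(i := False)) * coord_block yw i False (y i)
       + cube_zeta k x (y(i := True)) * coord_block yw i True (y i)"
proof -
  define P where "P \<longleftrightarrow> (\<forall>j\<in>{1..k} - {i}. y j \<longrightarrow> x j)"
  have zeta: "cube_zeta k x y = of_bool (P \<and> (y i \<longrightarrow> x i))"
    "cube_zeta k (flip i x) y = of_bool (P \<and> (y i \<longrightarrow> \<not> x i))"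
    "cube_zeta k x (y(i := False)) = of_bool P"
    "cube_zeta k x (y(i := True)) = of_bool (P \<and> x i)"
    using i by (auto simp: cube_zeta_def P_def flip_def)
  show ?thesis
    unfolding zeta by (cases P; cases "x i"; cases "y i") (simp_all add: coord_block_def algebra_simps)
qed

lemma forest_matrix_cube_similar:
  assumes "x \<in> cube_vertices k" "y \<in> cube_vertices k"
  shows "mat_mult_on (cube_vertices k) (forest_matrix (cube_edges k) z (edge_weight k yw)) (cube_zeta k) x y
       = mat_mult_on (cube_vertices k) (cube_zeta k) (cube_triangular k z yw) x y"
  using assms by (simp add: forest_matrix_cube_mult_zeta cube_zeta_mult_triangular cube_zeta_coord_identity)

lemma prod_cube_vertices_eq_prod_Pow:
  "(\<Prod>x\<in>cube_vertices k. f {i\<in>{1..k}. x i}) = (\<Prod>J\<in>Pow {1..k}. f J)"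
proof (rule prod.reindex_bij_betw)
  show "bij_betw (\<lambda>x. {i\<in>{1..k}. x i}) (cube_vertices k) (Pow {1..k})"
  proof (rule bij_betw_byWitness[where f' = "\<lambda>J. restrict (\<lambda>i. i \<in> J) {1..k}"])
    show "\<forall>x\<in>cube_vertices k. restrict (\<lambda>i. i \<in> {i\<in>{1..k}. x i}) {1..k} = x"
      using cube_vertex_outside by (auto simp: fun_eq_iff)
    show "(\<lambda>J. restrict (\<lambda>i. i \<in> J) {1..k}) ` Pow {1..k} \<subseteq> cube_vertices k"
      by (auto simp: cube_vertices_def)
  qed auto
qed

theorem corollary6p1:
  fixes k :: nat and z :: "'a::comm_ring_1" and yw :: "nat \<Rightarrow> bool \<Rightarrow> 'a"
  assumes "k \<ge> 1"
  shows "(\<Sum>F \<in> spanning_oriented_forests k. forest_weight k z yw F)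
       = (\<Prod>J \<in> Pow {1..k}. z + (\<Sum>i \<in> J. yw i False + yw i True))"
proof -
  let ?V = "cube_vertices k" and ?A = "forest_matrix (cube_edges k) z (edge_weight k yw)"
  have "(\<Sum>F \<in> spanning_oriented_forests k. forest_weight k z yw F) = det_on ?V ?A * det_on ?V (cube_zeta k)"
    by (simp add: cube_forest_sum_eq_det det_cube_zeta)
  also have "\<dots> = det_on ?V (cube_zeta k) * det_on ?V (cube_triangular k z yw)"
    by (simp add: det_on_mult[OF finite_cube_vertices, symmetric] forest_matrix_cube_similar
                  cong: det_on_cong)
  also have "\<dots> = (\<Prod>J \<in> Pow {1..k}. z + (\<Sum>i \<in> J. yw i False + yw i True))"
    unfolding det_cube_zeta det_cube_triangular mult_1_left by (rule prod_cube_vertices_eq_prod_Pow)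
  finally show ?thesis .
qed

end
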